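(* There is an absolute constant $c>0$ such that for all positive integers $t,N$ with $t\le \frac{N^{2(e^4-1)}}{36}$, $$\inf_{g}\ \sup_{R}\ \mathbb{E}\big[W_1(\Delta_R,g(\mathbf S))\big]\ \ge\ c\max\Big\{\frac1t,\ \frac{1}{\sqrt{t\log N}}\Big\},$$ where the supremum is over all probability distributions $R$ on $[0,1]^2$ and the infimum is over all estimators $g$ mapping the sample $\mathbf S$ to a probability distribution on $[-1,1]$.
   Context: Sampling model: given a probability distribution $R$ on $[0,1]^2$ and positive integers $N,t$, draw $(p_i,q_i)\sim R$ independently for $i=1,\dots,N$, and then, independently given these, $X_i\sim \mathrm{Binomial}(t,p_i)$ and $Y_i\sim\mathrm{Binomial}(t,q_i)$. The observed sample is $\mathbf S=\{(X_i,Y_i)\}_{i=1}^N$. For $(p,q)\sim R$ let $\Delta_R$ denote the distribution of $\delta=q-p$ on $[-1,1]$. $W_1$ denotes the Wasserstein-1 distance: $W_1(P,Q)=\sup_{f}\int f\,(dP-dQ)$, the supremum over all $1$-Lipschitz functions $f$ on the common support space. *)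

theory Defs
  imports "HOL-Analysis.Analysis" "HOL-Probability.Probability"
begin

text \<open>Wasserstein-1 distance between (probability) measures on the reals, via the
  Kantorovich--Rubinstein dual: supremum over 1-Lipschitz test functions.\<close>
definition W1 :: "real measure \<Rightarrow> real measure \<Rightarrow> real" where
  "W1 P Q = (SUP f \<in> {f :: real \<Rightarrow> real. lipschitz_on 1 UNIV f}.
               (\<integral>x. f x \<partial>P) - (\<integral>x. f x \<partial>Q))"

definition valid_R :: "(real \<times> real) measure \<Rightarrow> bool" where
  "valid_R R \<longleftrightarrow> prob_space R \<and> sets R = sets borel \<and>
     measure R ({0..1} \<times> {0..1}) = 1"

definition Delta :: "(real \<times> real) measure \<Rightarrow> real measure" where
  "Delta R = distr R borel (\<lambda>(p, q). q - p)"

definition binom_prob :: "nat \<Rightarrow> real \<Rightarrow> nat \<Rightarrow> real" where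
  "binom_prob t p x = real (t choose x) * p ^ x * (1 - p) ^ (t - x)"

definition pair_prob :: "(real \<times> real) measure \<Rightarrow> nat \<Rightarrow> nat \<times> nat \<Rightarrow> real" where
  "pair_prob R t xy = (\<integral>pq. binom_prob t (fst pq) (fst xy) * binom_prob t (snd pq) (snd xy) \<partial>R)"

definition samples :: "nat \<Rightarrow> nat \<Rightarrow> (nat \<times> nat) list set" where
  "samples N t = {s. length s = N \<and> set s \<subseteq> {0..t} \<times> {0..t}}"

definition sample_prob :: "(real \<times> real) measure \<Rightarrow> nat \<Rightarrow> (nat \<times> nat) list \<Rightarrow> real" where
  "sample_prob R t s = prod_list (map (pair_prob R t) s)"

definition valid_estimator :: "((nat \<times> nat) list \<Rightarrow> real measure) \<Rightarrow> bool" where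
  "valid_estimator g \<longleftrightarrow> (\<forall>s. prob_space (g s) \<and> sets (g s) = sets borel \<and>
                              measure (g s) {-1..1} = 1)"

definition risk :: "nat \<Rightarrow> nat \<Rightarrow> ((nat \<times> nat) list \<Rightarrow> real measure) \<Rightarrow> (real \<times> real) measure \<Rightarrow> real" where
  "risk N t g R = (\<Sum>s\<in>samples N t. sample_prob R t s * W1 (Delta R) (g s))"

end

theory Submission
  imports Defs
begin

text \<open>Le Cam's two-point method. Take q = 1/2 and let p - 1/2 follow one of two priors on
  n + 1 equally spaced nodes in [-w, w], namely the positive and negative parts of the
  signed weights (-1)^i C(n, i), whose moments of order less than n agree. The chi-square
  distance between the two Binomial(t, p) mixtures is then at most a binomial tail
  4 sum_{k>=n} C(t, k) (4 w^2)^k, so with n of order ln N and w^2 of order n / t the two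
  laws of the N-sample are within total variation 1/2. The laws of delta = q - p are,
  however, at W1 distance of order w / n, witnessed by a cosine test function alternating
  in sign along the nodes; this gives 1 / sqrt (t ln N). When t is small compared to ln N,
  n = t + 1 nodes make all t moments and hence the sample laws agree, giving 1 / t.\<close>

section \<open>Binomial mixtures with matched moments\<close>

lemma alternating_binomial_sum_Suc:
  fixes f :: "nat \<Rightarrow> real"
  shows "(\<Sum>i\<le>Suc n. (-1)^i * real (Suc n choose i) * f i)
       = (\<Sum>i\<le>n. (-1)^i * real (n choose i) * (f i - f (Suc i)))"
proof -
  have lhs: "(\<Sum>i\<le>Suc n. (-1)^i * real (Suc n choose i) * f i)
     = f 0 + (\<Sum>i\<le>n. (-1)^(Suc i) * (real (n choose i) + real (n choose Suc i)) * f (Suc i))"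
    by (subst sum.atMost_Suc_shift) simp
  have shift: "(\<Sum>i\<le>n. (-1)^i * real (n choose i) * f i)
     = f 0 + (\<Sum>i\<le>n. (-1)^(Suc i) * real (n choose Suc i) * f (Suc i))"
  proof (cases n)
    case (Suc m)
    have "(\<Sum>i\<le>n. (-1)^i * real (n choose i) * f i)
       = f 0 + (\<Sum>i\<le>m. (-1)^(Suc i) * real (n choose Suc i) * f (Suc i))"
      unfolding Suc by (subst sum.atMost_Suc_shift) (simp del: binomial_Suc_Suc)
    also have "(\<Sum>i\<le>m. (-1)^(Suc i) * real (n choose Suc i) * f (Suc i))
       = (\<Sum>i\<le>n. (-1)^(Suc i) * real (n choose Suc i) * f (Suc i))"
      unfolding Suc by (simp add: sum.atMost_Suc del: binomial_Suc_Suc)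
    finally show ?thesis .
  qed simp
  have "(\<Sum>i\<le>n. (-1)^i * real (n choose i) * (f i - f (Suc i)))
      = (\<Sum>i\<le>n. (-1)^i * real (n choose i) * f i)
        + (\<Sum>i\<le>n. (-1)^(Suc i) * real (n choose i) * f (Suc i))"
    by (simp add: sum.distrib[symmetric] algebra_simps)
  also have "\<dots> = f 0 + (\<Sum>i\<le>n. (-1)^(Suc i) * (real (n choose i) + real (n choose Suc i)) * f (Suc i))"
    unfolding shift by (simp add: add.assoc sum.distrib[symmetric] ring_distribs, intro sum.cong, auto)
  finally show ?thesis using lhs by simp
qed

lemma alternating_binomial_sum_power_eq_0:
  "k < n \<Longrightarrow> (\<Sum>i\<le>n. (-1)^i * real (n choose i) * (a + b * real i)^k) = 0"
proof (induction n arbitrary: k a)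
  case (Suc n)
  have difference: "(a + b * real i)^k - (a + b * real (Suc i))^k
      = - (\<Sum>j<k. real (k choose j) * b^(k-j) * (a + b * real i)^j)" for i
  proof -
    have "(a + b * real (Suc i))^k = ((a + b * real i) + b)^k" by (simp add: algebra_simps)
    also have "\<dots> = (\<Sum>j\<le>k. real (k choose j) * (a + b * real i)^j * b^(k-j))"
      by (rule binomial_ring)
    also have "\<dots> = (\<Sum>j<k. real (k choose j) * b^(k-j) * (a + b * real i)^j) + (a + b * real i)^k"
      by (simp add: lessThan_Suc_atMost[symmetric] algebra_simps)
    finally show ?thesis by simp
  qed
  have "(\<Sum>i\<le>Suc n. (-1)^i * real (Suc n choose i) * (a + b * real i)^k)
     = (\<Sum>i\<le>n. (-1)^i * real (n choose i) * (- (\<Sum>j<k. real (k choose j) * b^(k-j) * (a + b * real i)^j)))"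
    by (subst alternating_binomial_sum_Suc) (simp only: difference)
  also have "\<dots> = - (\<Sum>j<k. real (k choose j) * b^(k-j)
                      * (\<Sum>i\<le>n. (-1)^i * real (n choose i) * (a + b * real i)^j))"
    by (simp add: sum_distrib_left sum_negf algebra_simps sum.swap[of _ "{..n}"])
  also have "\<dots> = 0"
    using Suc.prems by (auto intro!: sum.neutral Suc.IH)
  finally show ?case .
qed simp

lemma binom_prob_half: "x \<le> t \<Longrightarrow> binom_prob t (1/2) x = real (t choose x) / 2^t"
  by (simp add: binom_prob_def power_add[symmetric] power_divide)

lemma sum_binom_prob: "(\<Sum>x\<le>t. binom_prob t p x) = 1"
  using binomial_ring[of p "1-p" t] by (simp add: binom_prob_def mult_ac)

lemma binom_prob_nonneg: "0 \<le> p \<Longrightarrow> p \<le> 1 \<Longrightarrow> 0 \<le> binom_prob t p x"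
  by (simp add: binom_prob_def)

lemma binom_prob_le_1:
  assumes "0 \<le> p" "p \<le> 1"
  shows "binom_prob t p x \<le> 1"
proof (cases "x \<le> t")
  case True
  have "binom_prob t p x \<le> (\<Sum>y\<le>t. binom_prob t p y)"
    by (rule member_le_sum) (use True assms in \<open>auto simp: binom_prob_def\<close>)
  then show ?thesis by (simp add: sum_binom_prob)
qed (simp add: binom_prob_def binomial_eq_0 not_le)

lemma borel_measurable_binom_prob_pair:
  "(\<lambda>pq::real \<times> real. binom_prob t (fst pq) x * binom_prob t (snd pq) y) \<in> borel_measurable borel"
  by (rule borel_measurable_continuous_onI) (simp add: binom_prob_def, intro continuous_intros)

text \<open>The chi-square distance of a signed mixture of Binomial(t, 1/2 + u i) from
  Binomial(t, 1/2) only sees the moments of the mixing weights; it follows from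
  2 (p p' + (1-p)(1-p')) = 1 + 4 u u' for p = 1/2 + u, p' = 1/2 + u'.\<close>
lemma chi_square_binomial_mixture:
  fixes \<nu> u :: "'a \<Rightarrow> real" and I :: "'a set"
  assumes "finite I"
  shows "(\<Sum>x\<le>t. (\<Sum>i\<in>I. \<nu> i * binom_prob t (1/2 + u i) x)^2 / binom_prob t (1/2) x)
       = (\<Sum>k\<le>t. real (t choose k) * 4^k * (\<Sum>i\<in>I. \<nu> i * u i ^ k)^2)"
proof -
  define P where "P i j = (1/2 + u i) * (1/2 + u j)" for i j
  define Q where "Q i j = (1 - (1/2 + u i)) * (1 - (1/2 + u j))" for i j
  have square: "(\<Sum>i\<in>I. \<nu> i * binom_prob t (1/2 + u i) x)^2 / binom_prob t (1/2) x
      = (\<Sum>i\<in>I. \<Sum>j\<in>I. \<nu> i * \<nu> j * (2^t * (real (t choose x) * P i j ^ x * Q i j ^ (t-x))))"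
    if "x \<le> t" for x
  proof -
    have "(\<Sum>i\<in>I. \<nu> i * binom_prob t (1/2 + u i) x)^2
       = (\<Sum>i\<in>I. \<Sum>j\<in>I. \<nu> i * \<nu> j * (real (t choose x) * real (t choose x) * P i j ^ x * Q i j ^ (t-x)))"
      by (simp add: power2_eq_square sum_product binom_prob_def P_def Q_def power_mult_distrib mult_ac)
    then show ?thesis using that
      by (simp add: binom_prob_half sum_distrib_left field_simps)
  qed
  have PQ: "2^t * (P i j + Q i j)^t = (4 * u i * u j + 1)^t" for i j
  proof -
    have "2 * (P i j + Q i j) = 4 * u i * u j + 1" by (simp add: P_def Q_def algebra_simps)
    then show ?thesis by (metis power_mult_distrib)
  qed
  have "(\<Sum>x\<le>t. (\<Sum>i\<in>I. \<nu> i * binom_prob t (1/2 + u i) x)^2 / binom_prob t (1/2) x)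
      = (\<Sum>x\<le>t. \<Sum>i\<in>I. \<Sum>j\<in>I. \<nu> i * \<nu> j * (2^t * (real (t choose x) * P i j ^ x * Q i j ^ (t-x))))"
    by (rule sum.cong) (auto simp: square)
  also have "\<dots> = (\<Sum>i\<in>I. \<Sum>j\<in>I. \<nu> i * \<nu> j * (2^t * (\<Sum>x\<le>t. real (t choose x) * P i j ^ x * Q i j ^ (t-x))))"
    by (simp add: sum.swap[of _ "{..t}"] sum_distrib_left)
  also have "\<dots> = (\<Sum>i\<in>I. \<Sum>j\<in>I. \<nu> i * \<nu> j * (2^t * (P i j + Q i j)^t))"
    by (simp add: binomial_ring)
  also have "\<dots> = (\<Sum>i\<in>I. \<Sum>j\<in>I. \<nu> i * \<nu> j * (4 * u i * u j + 1)^t)"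
    by (simp only: PQ)
  also have "\<dots> = (\<Sum>i\<in>I. \<Sum>j\<in>I. \<nu> i * \<nu> j * (\<Sum>k\<le>t. real (t choose k) * (4 * u i * u j)^k))"
    by (simp add: binomial_ring)
  also have "\<dots> = (\<Sum>k\<le>t. real (t choose k) * 4^k * ((\<Sum>i\<in>I. \<nu> i * u i ^ k) * (\<Sum>j\<in>I. \<nu> j * u j ^ k)))"
    by (simp add: sum_distrib_left sum_distrib_right sum.swap[of _ "{..t}"] power_mult_distrib mult_ac)
  finally show ?thesis by (simp add: power2_eq_square)
qed

lemma sum_abs_le_of_chi_square_le:
  fixes b d :: "'a \<Rightarrow> real"
  assumes "finite A" "\<And>x. x \<in> A \<Longrightarrow> b x > 0" "(\<Sum>x\<in>A. b x) = 1" "r > 0"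
    and chi_square: "(\<Sum>x\<in>A. (d x)^2 / b x) \<le> r^2"
  shows "(\<Sum>x\<in>A. \<bar>d x\<bar>) \<le> r"
proof -
  have am_gm: "\<bar>d x\<bar> \<le> (r * b x + (d x)^2 / b x / r) / 2" if "x \<in> A" for x
  proof -
    have bx: "b x > 0" using assms(2) that by auto
    have "0 \<le> (r * b x - \<bar>d x\<bar>)^2 / (r * b x)" using bx assms(4) by simp
    also have "\<dots> = r * b x + (d x)^2 / b x / r - 2 * \<bar>d x\<bar>"
      using bx assms(4) by (simp add: power2_eq_square field_simps)
    finally show ?thesis by simp
  qed
  have "(\<Sum>x\<in>A. \<bar>d x\<bar>) \<le> (\<Sum>x\<in>A. (r * b x + (d x)^2 / b x / r) / 2)"
    by (rule sum_mono) (rule am_gm)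
  also have "\<dots> = (r * (\<Sum>x\<in>A. b x) + (\<Sum>x\<in>A. (d x)^2 / b x) / r) / 2"
    by (simp only: sum_divide_distrib[symmetric] sum.distrib sum_distrib_left[symmetric])
  also have "\<dots> \<le> (r + r^2 / r) / 2"
    using assms(3-4) chi_square by (simp add: divide_right_mono)
  also have "\<dots> = r" using assms(4) by (simp add: power2_eq_square)
  finally show ?thesis .
qed

definition sign_weight :: "nat \<Rightarrow> nat \<Rightarrow> real" where
  "sign_weight n i = (-1)^i * real (n choose i) / 2^(n-1)"

definition node :: "nat \<Rightarrow> real \<Rightarrow> nat \<Rightarrow> real" where
  "node n w i = -w + 2 * w / real n * real i"

definition mixture_diff :: "nat \<Rightarrow> real \<Rightarrow> nat \<Rightarrow> nat \<Rightarrow> real" where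
  "mixture_diff n w t x = (\<Sum>i\<le>n. sign_weight n i * binom_prob t (1/2 + node n w i) x)"

lemma moment_sign_weight_eq_0: "k < n \<Longrightarrow> (\<Sum>i\<le>n. sign_weight n i * node n w i ^ k) = 0"
  using alternating_binomial_sum_power_eq_0[of k n "-w" "2 * w / real n"]
  by (simp add: sign_weight_def node_def sum_divide_distrib[symmetric] mult_ac)

lemma sum_abs_sign_weight: "n > 0 \<Longrightarrow> (\<Sum>i\<le>n. \<bar>sign_weight n i\<bar>) = 2"
proof -
  assume n: "n > 0"
  have "(\<Sum>i\<le>n. \<bar>sign_weight n i\<bar>) = (\<Sum>i\<le>n. real (n choose i)) / 2^(n-1)"
    by (simp add: sign_weight_def abs_mult sum_divide_distrib)
  also have "(\<Sum>i\<le>n. real (n choose i)) = 2^n"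
    using choose_row_sum[of n] by (metis of_nat_numeral of_nat_power of_nat_sum)
  also have "(2::real)^n / 2^(n-1) = 2" using n
    by (cases n) simp_all
  finally show ?thesis .
qed

lemma sign_weight_mult_sign: "sign_weight n i * (-1)^i = \<bar>sign_weight n i\<bar>"
  by (cases "even i") (simp_all add: sign_weight_def abs_mult)

lemma abs_node_le:
  assumes "i \<le> n" "n > 0" "w \<ge> 0"
  shows "\<bar>node n w i\<bar> \<le> w"
proof -
  have "2 * w / real n * real i = 2 * w * (real i / real n)" by simp
  also have "\<dots> \<le> 2 * w" using assms by (intro mult_left_le) auto
  moreover have "0 \<le> 2 * w / real n * real i" using assms by simp
  ultimately show ?thesis unfolding node_def abs_le_iff by linarith
qed

lemma abs_moment_sign_weight_le:
  assumes "n > 0" "w \<ge> 0"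
  shows "\<bar>\<Sum>i\<le>n. sign_weight n i * node n w i ^ k\<bar> \<le> 2 * w^k"
proof -
  have "\<bar>\<Sum>i\<le>n. sign_weight n i * node n w i ^ k\<bar> \<le> (\<Sum>i\<le>n. \<bar>sign_weight n i\<bar> * w^k)"
    using abs_node_le[OF _ assms]
    by (intro order_trans[OF sum_abs] sum_mono)
       (auto simp: abs_mult power_abs intro!: mult_left_mono power_mono)
  also have "\<dots> = 2 * w^k"
    using sum_abs_sign_weight[OF assms(1)] by (simp add: sum_distrib_right[symmetric])
  finally show ?thesis .
qed

lemma chi_square_mixture_diff_le:
  assumes "n > 0" "w \<ge> 0"
  shows "(\<Sum>x\<le>t. (mixture_diff n w t x)^2 / binom_prob t (1/2) x)
     \<le> 4 * (\<Sum>k\<in>{n..t}. real (t choose k) * (4 * w^2)^k)"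
proof -
  have "(\<Sum>x\<le>t. (mixture_diff n w t x)^2 / binom_prob t (1/2) x)
     = (\<Sum>k\<le>t. real (t choose k) * 4^k * (\<Sum>i\<le>n. sign_weight n i * node n w i ^ k)^2)"
    unfolding mixture_diff_def by (rule chi_square_binomial_mixture) simp
  also have "\<dots> = (\<Sum>k\<in>{n..t}. real (t choose k) * 4^k * (\<Sum>i\<le>n. sign_weight n i * node n w i ^ k)^2)"
    by (rule sum.mono_neutral_right) (auto simp: moment_sign_weight_eq_0)
  also have "\<dots> \<le> (\<Sum>k\<in>{n..t}. real (t choose k) * 4^k * (2 * w^k)^2)"
  proof (intro sum_mono mult_left_mono)
    fix k
    show "(\<Sum>i\<le>n. sign_weight n i * node n w i ^ k)^2 \<le> (2 * w^k)^2"
      using abs_moment_sign_weight_le[OF assms, of k] assms(2)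
      by (metis abs_le_square_iff abs_of_nonneg zero_le_mult_iff zero_le_numeral zero_le_power)
  qed simp
  also have "\<dots> = 4 * (\<Sum>k\<in>{n..t}. real (t choose k) * (4 * w^2)^k)"
    by (simp add: sum_distrib_left power_mult_distrib power_mult[symmetric] mult_ac)
  finally show ?thesis .
qed

section \<open>Wasserstein distance on [-1, 1]\<close>

definition prob_on_pm1 :: "real measure \<Rightarrow> bool" where
  "prob_on_pm1 M \<longleftrightarrow> prob_space M \<and> sets M = sets borel \<and> measure M {-1..1} = 1"

lemma valid_estimator_prob_on_pm1: "valid_estimator g \<Longrightarrow> prob_on_pm1 (g s)"
  by (simp add: valid_estimator_def prob_on_pm1_def)

lemma borel_measurable_sets_eq_borel:
  "sets M = sets borel \<Longrightarrow> f \<in> borel_measurable borel \<Longrightarrow> f \<in> borel_measurable M"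
  using measurable_cong_sets[of M borel borel borel] by simp

lemma borel_measurable_lipschitz:
  fixes f :: "real \<Rightarrow> real"
  assumes "lipschitz_on C UNIV f" "sets M = sets borel"
  shows "f \<in> borel_measurable M"
  using borel_measurable_continuous_onI[OF lipschitz_on_continuous_on[OF assms(1)]]
  by (rule borel_measurable_sets_eq_borel[OF assms(2)])

lemma abs_integral_lipschitz_pm1:
  fixes f :: "real \<Rightarrow> real"
  assumes M: "prob_on_pm1 M" and f: "lipschitz_on 1 UNIV f"
  shows "\<bar>(\<integral>x. f x \<partial>M) - f 0\<bar> \<le> 1"
proof -
  interpret prob_space M using M by (simp add: prob_on_pm1_def)
  have "AE x in M. x \<in> {-1..1}"
    by (rule AE_prob_1) (use M in \<open>simp add: prob_on_pm1_def\<close>)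
  then have bound: "AE x in M. \<bar>f x - f 0\<bar> \<le> 1"
  proof (rule eventually_mono)
    fix x :: real assume "x \<in> {-1..1}"
    moreover have "dist (f x) (f 0) \<le> 1 * dist x 0"
      using lipschitz_onD[OF f] by blast
    ultimately show "\<bar>f x - f 0\<bar> \<le> 1" by (auto simp: dist_real_def)
  qed
  have "f \<in> borel_measurable M"
    using borel_measurable_lipschitz f M by (simp add: prob_on_pm1_def)
  then have centered: "integrable M (\<lambda>x. f x - f 0)"
    by (intro Bochner_Integration.integrable_bound[of M "\<lambda>_. 1::real", OF integrable_const])
       (use bound in auto)
  then have "integrable M f"
    using Bochner_Integration.integrable_add[OF centered, of "\<lambda>_. f 0"] by simp
  then have "(\<integral>x. f x \<partial>M) - f 0 = (\<integral>x. f x - f 0 \<partial>M)"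
    by (simp add: prob_space)
  moreover have "(\<integral>x. f x - f 0 \<partial>M) \<le> 1"
    using centered bound by (intro integral_le_const) auto
  moreover have "-1 \<le> (\<integral>x. f x - f 0 \<partial>M)"
    using centered bound by (intro integral_ge_const) auto
  ultimately show ?thesis by linarith
qed

lemma integral_diff_le_2:
  fixes f :: "real \<Rightarrow> real"
  assumes "prob_on_pm1 P" "prob_on_pm1 Q" "lipschitz_on 1 UNIV f"
  shows "(\<integral>x. f x \<partial>P) - (\<integral>x. f x \<partial>Q) \<le> 2"
  using abs_integral_lipschitz_pm1[OF assms(1,3)] abs_integral_lipschitz_pm1[OF assms(2,3)] by linarith

lemma integral_diff_le_W1:
  fixes f :: "real \<Rightarrow> real"
  assumes "prob_on_pm1 P" "prob_on_pm1 Q" "lipschitz_on 1 UNIV f"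
  shows "(\<integral>x. f x \<partial>P) - (\<integral>x. f x \<partial>Q) \<le> W1 P Q"
  unfolding W1_def
proof (rule cSUP_upper)
  show "bdd_above ((\<lambda>f. (\<integral>x. f x \<partial>P) - (\<integral>x. f x \<partial>Q)) ` {f :: real \<Rightarrow> real. lipschitz_on 1 UNIV f})"
    by (rule bdd_aboveI2[where M = 2]) (use integral_diff_le_2[OF assms(1,2)] in auto)
qed (use assms(3) in simp)

lemma lipschitz_on_const_zero: "1-lipschitz_on UNIV (\<lambda>x::real. 0::real)"
  by (rule lipschitz_on_mono[OF lipschitz_on_constant]) auto

lemma W1_nonneg: "prob_on_pm1 P \<Longrightarrow> prob_on_pm1 Q \<Longrightarrow> 0 \<le> W1 P Q"
  using integral_diff_le_W1[OF _ _ lipschitz_on_const_zero] by simp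

lemma W1_le_2: "prob_on_pm1 P \<Longrightarrow> prob_on_pm1 Q \<Longrightarrow> W1 P Q \<le> 2"
  unfolding W1_def using lipschitz_on_const_zero
  by (intro cSUP_least) (auto intro: integral_diff_le_2)

text \<open>Testing P against f and Q against -f, both relative to the same M.\<close>
lemma integral_diff_le_W1_add:
  fixes f :: "real \<Rightarrow> real"
  assumes "prob_on_pm1 P" "prob_on_pm1 Q" "prob_on_pm1 M" "lipschitz_on 1 UNIV f"
  shows "(\<integral>x. f x \<partial>P) - (\<integral>x. f x \<partial>Q) \<le> W1 P M + W1 Q M"
  using integral_diff_le_W1[OF assms(1,3,4)] integral_diff_le_W1[OF assms(2,3) lipschitz_on_minus[OF assms(4)]]
  by simp

lemma borel_measurable_diff_swap: "(\<lambda>(p::real, q::real). q - p) \<in> borel_measurable borel"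
proof -
  have "(\<lambda>x::real \<times> real. snd x - fst x) \<in> borel_measurable borel"
    by (intro borel_measurable_continuous_onI continuous_intros)
  then show ?thesis by (simp add: case_prod_beta')
qed

lemma measurable_diff_swap:
  "sets R = sets borel \<Longrightarrow> (\<lambda>(p::real, q::real). q - p) \<in> measurable R borel"
  using borel_measurable_sets_eq_borel borel_measurable_diff_swap by blast

lemma prob_on_pm1_Delta:
  assumes "valid_R R" shows "prob_on_pm1 (Delta R)"
proof -
  have sR: "sets R = sets borel" and mR: "measure R ({0..1} \<times> {0..1}) = 1"
    using assms by (auto simp: valid_R_def)
  interpret prob_space R using assms by (simp add: valid_R_def)
  note diff_meas = measurable_diff_swap[OF sR]
  let ?A = "(\<lambda>(p, q). q - p) -` {-1..1::real} \<inter> space R"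
  have "{0..1} \<times> {0..1} \<subseteq> ?A"
    using sets_eq_imp_space_eq[OF sR] by auto
  moreover have "?A \<in> events"
    using diff_meas by (rule measurable_sets) simp
  ultimately have "measure R ?A = 1"
    using finite_measure_mono[of "{0..1} \<times> {0..1}" ?A] mR prob_le_1 by (simp add: antisym)
  then have "measure (Delta R) {-1..1} = 1"
    unfolding Delta_def by (subst measure_distr[OF diff_meas]) simp_all
  then show ?thesis
    unfolding prob_on_pm1_def Delta_def using prob_space_distr[OF diff_meas] by simp
qed

section \<open>The two priors\<close>

definition parity_weight :: "nat \<Rightarrow> bool \<Rightarrow> nat \<Rightarrow> real" where
  "parity_weight n b i = (if i \<le> n \<and> even i = b then real (n choose i) / 2^(n-1) else 0)"

lemma parity_weight_nonneg: "0 \<le> parity_weight n b i"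
  by (simp add: parity_weight_def)

lemma sign_weight_eq_diff: "i \<le> n \<Longrightarrow> sign_weight n i = parity_weight n True i - parity_weight n False i"
  by (simp add: sign_weight_def parity_weight_def)

lemma sum_parity_weight:
  assumes "n > 0"
  shows "(\<Sum>i\<le>n. parity_weight n b i) = 1"
proof -
  have "(\<Sum>i\<le>n. parity_weight n b i) = (\<Sum>i\<le>n. if even i = b then real (n choose i) else 0) / 2^(n-1)"
    unfolding parity_weight_def sum_divide_distrib by (rule sum.cong) auto
  also have "(\<Sum>i\<le>n. if even i = b then real (n choose i) else 0) = 2^(n-1)"
    using choose_even_sum[OF assms, where 'a = real] choose_odd_sum[OF assms, where 'a = real]
      power_minus_mult[OF assms, of "2::real"]
    by (cases b) auto
  finally show ?thesis by simp
qed

definition parity_pmf :: "nat \<Rightarrow> bool \<Rightarrow> nat pmf" where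
  "parity_pmf n b = embed_pmf (parity_weight n b)"

lemma pmf_parity_pmf:
  assumes "n > 0"
  shows "pmf (parity_pmf n b) i = parity_weight n b i"
proof -
  have "(\<integral>\<^sup>+x. ennreal (parity_weight n b x) \<partial>count_space UNIV) = (\<Sum>x\<le>n. ennreal (parity_weight n b x))"
    by (rule nn_integral_count_space') (auto simp: parity_weight_def)
  also have "\<dots> = 1"
    using sum_parity_weight[OF assms] by (simp add: sum_ennreal parity_weight_nonneg)
  finally show ?thesis
    unfolding parity_pmf_def by (intro pmf_embed_pmf) (auto simp: parity_weight_nonneg)
qed

lemma set_parity_pmf_subset: "n > 0 \<Longrightarrow> set_pmf (parity_pmf n b) \<subseteq> {..n}"
  by (auto simp: set_pmf_iff pmf_parity_pmf parity_weight_def split: if_splits)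

lemma integral_parity_pmf:
  fixes f :: "nat \<Rightarrow> real"
  assumes "n > 0"
  shows "(\<integral>i. f i \<partial>measure_pmf (parity_pmf n b)) = (\<Sum>i\<le>n. parity_weight n b i * f i)"
  using set_parity_pmf_subset[OF assms]
  by (subst integral_measure_pmf_real[where A = "{..n}"]) (auto simp: pmf_parity_pmf[OF assms] mult.commute)

definition moment_prior :: "nat \<Rightarrow> real \<Rightarrow> bool \<Rightarrow> (real \<times> real) measure" where
  "moment_prior n w b = distr (measure_pmf (parity_pmf n b)) borel (\<lambda>i. (1/2 + node n w i, 1/2))"

lemma integral_moment_prior:
  fixes F :: "real \<times> real \<Rightarrow> real"
  assumes "n > 0" "F \<in> borel_measurable borel"
  shows "(\<integral>z. F z \<partial>moment_prior n w b) = (\<Sum>i\<le>n. parity_weight n b i * F (1/2 + node n w i, 1/2))"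
  unfolding moment_prior_def
  by (simp add: integral_distr[OF _ assms(2)] integral_parity_pmf[OF assms(1)])

lemma valid_R_moment_prior:
  assumes "n > 0" "0 \<le> w" "w \<le> 1/2"
  shows "valid_R (moment_prior n w b)"
proof -
  let ?T = "\<lambda>i. (1/2 + node n w i, 1/2::real)"
  interpret prob_space "moment_prior n w b"
    unfolding moment_prior_def by (rule measure_pmf.prob_space_distr) simp
  have "AE i in measure_pmf (parity_pmf n b). i \<in> ?T -` ({0..1} \<times> {0..1})"
  proof (rule AE_pmfI)
    fix i assume "i \<in> set_pmf (parity_pmf n b)"
    then have "i \<le> n" using set_parity_pmf_subset[OF assms(1)] by auto
    then have "\<bar>node n w i\<bar> \<le> w" using abs_node_le assms by simp
    then show "i \<in> ?T -` ({0..1} \<times> {0..1})" using assms by auto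
  qed
  then have "measure (measure_pmf (parity_pmf n b)) (?T -` ({0..1} \<times> {0..1})) = 1"
    by (simp add: measure_pmf.prob_eq_1)
  then have "measure (moment_prior n w b) ({0..1} \<times> {0..1}) = 1"
    unfolding moment_prior_def by (subst measure_distr) (auto intro!: borel_closed closed_Times)
  then show ?thesis unfolding valid_R_def
    using prob_space_axioms by (simp add: moment_prior_def)
qed

lemma pair_prob_moment_prior:
  assumes "n > 0"
  shows "pair_prob (moment_prior n w b) t (x, y)
     = (\<Sum>i\<le>n. parity_weight n b i * binom_prob t (1/2 + node n w i) x) * binom_prob t (1/2) y"
  unfolding pair_prob_def
  by (simp add: integral_moment_prior[OF assms borel_measurable_binom_prob_pair] sum_distrib_left mult_ac)

lemma integral_Delta_moment_prior:
  fixes f :: "real \<Rightarrow> real"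
  assumes "n > 0" "f \<in> borel_measurable borel"
  shows "(\<integral>z. f z \<partial>Delta (moment_prior n w b)) = (\<Sum>i\<le>n. parity_weight n b i * f (- node n w i))"
proof -
  have "(\<lambda>z. f ((\<lambda>(p::real, q::real). q - p) z)) \<in> borel_measurable borel"
    using measurable_comp[OF borel_measurable_diff_swap assms(2)] by (simp add: comp_def)
  moreover have "(\<integral>z. f z \<partial>Delta (moment_prior n w b))
      = (\<integral>z. f ((\<lambda>(p::real, q::real). q - p) z) \<partial>moment_prior n w b)"
    unfolding Delta_def
    by (rule integral_distr[OF measurable_diff_swap assms(2)]) (simp add: moment_prior_def)
  ultimately show ?thesis by (simp add: integral_moment_prior[OF assms(1)])
qed

lemma samples_0: "samples 0 t = {[]}"
  by (auto simp: samples_def)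

lemma samples_Suc: "samples (Suc N) t = (\<lambda>(a, s). a # s) ` (({0..t} \<times> {0..t}) \<times> samples N t)"
  by (auto simp: samples_def length_Suc_conv image_iff)

lemma finite_samples: "finite (samples N t)"
  by (induction N) (auto simp: samples_0 samples_Suc)

lemma inj_on_Cons_pair: "inj_on (\<lambda>(a, s). a # s) X"
  by (auto simp: inj_on_def)

lemma sum_samples_Suc:
  "(\<Sum>s\<in>samples (Suc N) t. F s) = (\<Sum>a\<in>{0..t} \<times> {0..t}. \<Sum>s\<in>samples N t. F (a # s))"
  unfolding samples_Suc
  by (subst sum.reindex[OF inj_on_Cons_pair]) (simp add: case_prod_beta' sum.cartesian_product)

lemma sum_prod_list_samples:
  "(\<Sum>s\<in>samples N t. prod_list (map h s)) = (\<Sum>xy\<in>{0..t} \<times> {0..t}. (h xy :: real))^N"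
  by (induction N) (simp_all add: samples_0 sum_samples_Suc flip: sum_distrib_left sum_distrib_right)

lemma prod_list_map_le_1:
  "(\<And>a. a \<in> set s \<Longrightarrow> 0 \<le> h a \<and> h a \<le> 1) \<Longrightarrow> prod_list (map h s :: real list) \<le> 1"
  by (induction s) (auto intro!: mult_le_one prod_list_nonneg)

lemma sum_abs_diff_prod_list_samples_le:
  fixes h1 h2 :: "nat \<times> nat \<Rightarrow> real"
  assumes nonneg: "\<And>a. a \<in> {0..t} \<times> {0..t} \<Longrightarrow> 0 \<le> h1 a \<and> 0 \<le> h2 a"
    and sum1: "(\<Sum>xy\<in>{0..t} \<times> {0..t}. h1 xy) = 1" and sum2: "(\<Sum>xy\<in>{0..t} \<times> {0..t}. h2 xy) = 1"
  shows "(\<Sum>s\<in>samples N t. \<bar>prod_list (map h1 s) - prod_list (map h2 s)\<bar>)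
     \<le> real N * (\<Sum>xy\<in>{0..t} \<times> {0..t}. \<bar>h1 xy - h2 xy\<bar>)"
proof (induction N)
  case (Suc N)
  let ?A = "{0..t} \<times> {0..t}"
  let ?D = "\<Sum>xy\<in>?A. \<bar>h1 xy - h2 xy\<bar>"
  let ?E = "\<lambda>s. \<bar>prod_list (map h1 s) - prod_list (map h2 s)\<bar>"
  have "(\<Sum>s\<in>samples (Suc N) t. ?E s)
      = (\<Sum>a\<in>?A. \<Sum>s\<in>samples N t. \<bar>h1 a * prod_list (map h1 s) - h2 a * prod_list (map h2 s)\<bar>)"
    by (simp add: sum_samples_Suc)
  also have "\<dots> \<le> (\<Sum>a\<in>?A. \<Sum>s\<in>samples N t. \<bar>h1 a - h2 a\<bar> * prod_list (map h1 s) + h2 a * ?E s)"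
  proof (intro sum_mono)
    fix a s assume a: "a \<in> ?A" and s: "s \<in> samples N t"
    have "0 \<le> prod_list (map h1 s)"
      using s nonneg by (intro prod_list_nonneg) (auto simp: samples_def)
    moreover have "h1 a * prod_list (map h1 s) - h2 a * prod_list (map h2 s)
        = (h1 a - h2 a) * prod_list (map h1 s) + h2 a * (prod_list (map h1 s) - prod_list (map h2 s))"
      by (simp add: algebra_simps)
    ultimately show "\<bar>h1 a * prod_list (map h1 s) - h2 a * prod_list (map h2 s)\<bar>
        \<le> \<bar>h1 a - h2 a\<bar> * prod_list (map h1 s) + h2 a * ?E s"
      using nonneg[OF a] by (simp add: abs_mult abs_triangle_ineq[THEN order_trans])
  qed
  also have "\<dots> = ?D * (\<Sum>s\<in>samples N t. prod_list (map h1 s))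
                 + (\<Sum>a\<in>?A. h2 a) * (\<Sum>s\<in>samples N t. ?E s)"
    by (simp add: sum.distrib flip: sum_distrib_left sum_distrib_right)
  also have "\<dots> \<le> ?D + real N * ?D"
    using Suc.IH by (simp add: sum_prod_list_samples sum1 sum2)
  finally show ?case by (simp add: algebra_simps)
qed (simp add: samples_0)

lemma pair_prob_nonneg_le_1:
  assumes "valid_R R"
  shows "0 \<le> pair_prob R t xy \<and> pair_prob R t xy \<le> 1"
proof -
  have sR: "sets R = sets borel" and mR: "measure R ({0..1} \<times> {0..1}) = 1"
    using assms by (auto simp: valid_R_def)
  interpret prob_space R using assms by (simp add: valid_R_def)
  define F where "F = (\<lambda>pq::real \<times> real. binom_prob t (fst pq) (fst xy) * binom_prob t (snd pq) (snd xy))"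
  have "AE pq in R. pq \<in> {0..1} \<times> {0..1}" by (rule AE_prob_1[OF mR])
  then have F_bounds: "AE pq in R. 0 \<le> F pq \<and> F pq \<le> 1"
    by (rule eventually_mono)
       (auto simp: F_def intro!: mult_le_one binom_prob_le_1 binom_prob_nonneg mult_nonneg_nonneg)
  have "F \<in> borel_measurable R"
    unfolding F_def by (rule borel_measurable_sets_eq_borel[OF sR borel_measurable_binom_prob_pair])
  moreover have "AE pq in R. norm (F pq) \<le> norm (1::real)"
    using F_bounds by (rule eventually_mono) auto
  ultimately have "integrable R F"
    by (rule Bochner_Integration.integrable_bound[OF integrable_const])
  then have "0 \<le> (\<integral>pq. F pq \<partial>R)" "(\<integral>pq. F pq \<partial>R) \<le> 1"
    using F_bounds by (auto intro!: integral_ge_const integral_le_const elim!: eventually_mono)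
  then show ?thesis unfolding pair_prob_def F_def by simp
qed

lemma sample_prob_nonneg_le_1:
  "valid_R R \<Longrightarrow> 0 \<le> sample_prob R t s \<and> sample_prob R t s \<le> 1"
  unfolding sample_prob_def
  using pair_prob_nonneg_le_1 by (auto intro!: prod_list_nonneg prod_list_map_le_1)

lemma bdd_above_risk:
  assumes "valid_estimator g"
  shows "bdd_above ((\<lambda>R. risk N t g R) ` {R. valid_R R})"
proof (rule bdd_aboveI2)
  fix R assume "R \<in> {R. valid_R R}"
  then have R: "valid_R R" by simp
  have "risk N t g R \<le> (\<Sum>s\<in>samples N t. 1 * 2)"
    unfolding risk_def
  proof (rule sum_mono)
    fix s
    note Delta_g = prob_on_pm1_Delta[OF R] valid_estimator_prob_on_pm1[OF assms]
    show "sample_prob R t s * W1 (Delta R) (g s) \<le> 1 * 2"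
      using sample_prob_nonneg_le_1[OF R, of t s] W1_le_2[OF Delta_g] W1_nonneg[OF Delta_g]
      by (intro mult_mono) auto
  qed
  then show "risk N t g R \<le> 2 * real (card (samples N t))" by simp
qed

lemma sum_Times_mult:
  fixes f g :: "'a \<Rightarrow> real"
  shows "(\<Sum>xy\<in>A \<times> B. f (fst xy) * g (snd xy)) = sum f A * sum g B"
  by (simp add: sum_product sum.cartesian_product case_prod_unfold)

lemma sum_pair_prob_moment_prior:
  assumes "n > 0"
  shows "(\<Sum>xy\<in>{0..t} \<times> {0..t}. pair_prob (moment_prior n w b) t xy) = 1"
proof -
  define M where "M x = (\<Sum>i\<le>n. parity_weight n b i * binom_prob t (1/2 + node n w i) x)" for x
  have "(\<Sum>xy\<in>{0..t} \<times> {0..t}. pair_prob (moment_prior n w b) t xy)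
      = (\<Sum>xy\<in>{0..t} \<times> {0..t}. M (fst xy) * binom_prob t (1/2) (snd xy))"
    by (intro sum.cong refl) (auto simp: pair_prob_moment_prior[OF assms] M_def)
  also have "\<dots> = (\<Sum>x\<le>t. M x)"
    by (simp add: sum_Times_mult atLeast0AtMost sum_binom_prob)
  also have "\<dots> = (\<Sum>i\<le>n. parity_weight n b i * (\<Sum>x\<le>t. binom_prob t (1/2 + node n w i) x))"
    unfolding M_def by (simp add: sum.swap[of _ "{..t}"] sum_distrib_left)
  also have "\<dots> = 1" by (simp add: sum_binom_prob sum_parity_weight[OF assms])
  finally show ?thesis .
qed

lemma sum_abs_pair_prob_moment_prior_diff:
  assumes "n > 0"
  shows "(\<Sum>xy\<in>{0..t} \<times> {0..t}. \<bar>pair_prob (moment_prior n w True) t xy - pair_prob (moment_prior n w False) t xy\<bar>)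
       = (\<Sum>x\<le>t. \<bar>mixture_diff n w t x\<bar>)"
proof -
  have diff: "pair_prob (moment_prior n w True) t (x, y) - pair_prob (moment_prior n w False) t (x, y)
       = mixture_diff n w t x * binom_prob t (1/2) y" for x y
  proof -
    have "(\<Sum>i\<le>n. parity_weight n True i * binom_prob t (1/2 + node n w i) x)
          - (\<Sum>i\<le>n. parity_weight n False i * binom_prob t (1/2 + node n w i) x)
        = mixture_diff n w t x"
      unfolding mixture_diff_def sum_subtractf[symmetric]
      by (rule sum.cong) (auto simp: sign_weight_eq_diff algebra_simps)
    then show ?thesis by (simp add: pair_prob_moment_prior[OF assms] left_diff_distrib[symmetric])
  qed
  have "(\<Sum>xy\<in>{0..t} \<times> {0..t}. \<bar>pair_prob (moment_prior n w True) t xy - pair_prob (moment_prior n w False) t xy\<bar>)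
      = (\<Sum>xy\<in>{0..t} \<times> {0..t}. \<bar>mixture_diff n w t (fst xy)\<bar> * binom_prob t (1/2) (snd xy))"
    by (intro sum.cong refl) (auto simp: diff abs_mult binom_prob_nonneg)
  also have "\<dots> = (\<Sum>x\<le>t. \<bar>mixture_diff n w t x\<bar>)"
    by (simp add: sum_Times_mult[of "\<lambda>x. \<bar>mixture_diff n w t x\<bar>"] atLeast0AtMost sum_binom_prob)
  finally show ?thesis .
qed

lemma sum_abs_sample_prob_moment_prior_diff_le:
  assumes "n > 0" "0 \<le> w" "w \<le> 1/2"
  shows "(\<Sum>s\<in>samples N t. \<bar>sample_prob (moment_prior n w True) t s - sample_prob (moment_prior n w False) t s\<bar>)
       \<le> real N * (\<Sum>x\<le>t. \<bar>mixture_diff n w t x\<bar>)"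
  unfolding sample_prob_def sum_abs_pair_prob_moment_prior_diff[OF assms(1), symmetric]
  using pair_prob_nonneg_le_1[OF valid_R_moment_prior[OF assms]] sum_pair_prob_moment_prior[OF assms(1)]
  by (intro sum_abs_diff_prod_list_samples_le) auto

section \<open>The two-point bound\<close>

text \<open>Le Cam's two-point bound: if the two sample distributions overlap in mass at least 1/2,
  no estimator can be within delta/2 of both targets.\<close>
lemma le_cam_two_point:
  fixes P1 P2 L1 L2 :: "'a \<Rightarrow> real"
  assumes "finite S"
    and nonneg: "\<And>s. s \<in> S \<Longrightarrow> 0 \<le> P1 s \<and> 0 \<le> P2 s \<and> 0 \<le> L1 s \<and> 0 \<le> L2 s"
    and separated: "\<And>s. s \<in> S \<Longrightarrow> \<delta> \<le> L1 s + L2 s"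
    and sum1: "(\<Sum>s\<in>S. P1 s) = 1" and tv: "(\<Sum>s\<in>S. \<bar>P1 s - P2 s\<bar>) \<le> 1/2" and "0 \<le> \<delta>"
  shows "\<delta> / 2 \<le> (\<Sum>s\<in>S. P1 s * L1 s) + (\<Sum>s\<in>S. P2 s * L2 s)"
proof -
  have "(\<Sum>s\<in>S. P1 s) - (\<Sum>s\<in>S. \<bar>P1 s - P2 s\<bar>) \<le> (\<Sum>s\<in>S. min (P1 s) (P2 s))"
    unfolding sum_subtractf[symmetric] by (rule sum_mono) auto
  then have "1/2 \<le> (\<Sum>s\<in>S. min (P1 s) (P2 s))"
    using sum1 tv by linarith
  from mult_right_mono[OF this \<open>0 \<le> \<delta>\<close>]
  have "\<delta> / 2 \<le> (\<Sum>s\<in>S. min (P1 s) (P2 s) * \<delta>)"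
    by (simp add: sum_distrib_right)
  also have "\<dots> \<le> (\<Sum>s\<in>S. min (P1 s) (P2 s) * (L1 s + L2 s))"
    using nonneg separated by (intro sum_mono mult_left_mono) auto
  also have "\<dots> \<le> (\<Sum>s\<in>S. P1 s * L1 s + P2 s * L2 s)"
    using nonneg by (intro sum_mono) (simp add: distrib_left add_mono mult_right_mono)
  finally show ?thesis by (simp add: sum.distrib)
qed

lemma abs_cos_diff_le: "\<bar>cos a - cos b\<bar> \<le> \<bar>a - b\<bar>" for a b :: real
proof -
  have "\<bar>cos a - cos b\<bar> = 2 * \<bar>sin ((a + b) / 2)\<bar> * \<bar>sin ((b - a) / 2)\<bar>"
    by (simp add: cos_diff_cos abs_mult)
  also have "\<dots> \<le> 2 * 1 * \<bar>(b - a) / 2\<bar>"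
    by (intro mult_mono abs_sin_x_le_abs_x) auto
  finally show ?thesis by simp
qed

text \<open>At the points c - h i the test function takes the alternating values (-1)^i h / pi.\<close>
definition cos_test :: "real \<Rightarrow> real \<Rightarrow> real \<Rightarrow> real" where
  "cos_test h c d = h / pi * cos (pi * (c - d) / h)"

lemma lipschitz_on_cos_test:
  assumes "h > 0"
  shows "lipschitz_on 1 UNIV (cos_test h c)"
proof (rule lipschitz_onI)
  fix a b :: real
  have "cos_test h c a - cos_test h c b = h / pi * (cos (pi * (c - a) / h) - cos (pi * (c - b) / h))"
    by (simp add: cos_test_def right_diff_distrib)
  then have "\<bar>cos_test h c a - cos_test h c b\<bar>
      = h / pi * \<bar>cos (pi * (c - a) / h) - cos (pi * (c - b) / h)\<bar>"
    using assms by (simp add: abs_mult)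
  also have "\<dots> \<le> h / pi * \<bar>pi * (c - a) / h - pi * (c - b) / h\<bar>"
    using assms by (intro mult_left_mono abs_cos_diff_le) auto
  also have "\<dots> = \<bar>a - b\<bar>"
  proof -
    have "pi * (c - a) / h - pi * (c - b) / h = pi / h * (b - a)"
      using assms by (simp add: field_simps)
    then show ?thesis using assms by (simp add: abs_mult abs_minus_commute)
  qed
  finally show "dist (cos_test h c a) (cos_test h c b) \<le> 1 * dist a b"
    by (simp add: dist_real_def)
qed simp

lemma integral_Delta_moment_prior_diff:
  assumes "n > 0" "w > 0"
  shows "(\<integral>d. cos_test (2 * w / n) w d \<partial>Delta (moment_prior n w True))
       - (\<integral>d. cos_test (2 * w / n) w d \<partial>Delta (moment_prior n w False)) = 4 * w / (pi * n)"
proof -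
  let ?h = "2 * w / n"
  have at_node: "cos_test ?h w (- node n w i) = ?h / pi * (-1)^i" for i
  proof -
    have "pi * (w - - node n w i) / ?h = real i * pi"
      using assms by (simp add: node_def field_simps)
    then show ?thesis by (simp add: cos_test_def)
  qed
  have meas: "cos_test ?h w \<in> borel_measurable borel"
    using assms
    by (intro borel_measurable_continuous_onI lipschitz_on_continuous_on[OF lipschitz_on_cos_test]) auto
  have "(\<integral>d. cos_test ?h w d \<partial>Delta (moment_prior n w b))
      = (\<Sum>i\<le>n. parity_weight n b i * (?h / pi * (-1)^i))" for b
    by (simp only: integral_Delta_moment_prior[OF assms(1) meas] at_node)
  then have "(\<integral>d. cos_test ?h w d \<partial>Delta (moment_prior n w True))
        - (\<integral>d. cos_test ?h w d \<partial>Delta (moment_prior n w False))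
      = (\<Sum>i\<le>n. (parity_weight n True i - parity_weight n False i) * (?h / pi * (-1)^i))"
    by (simp only: sum_subtractf[symmetric] left_diff_distrib)
  also have "\<dots> = (\<Sum>i\<le>n. ?h / pi * \<bar>sign_weight n i\<bar>)"
  proof (intro sum.cong refl)
    fix i assume "i \<in> {..n}"
    then have "parity_weight n True i - parity_weight n False i = sign_weight n i"
      by (simp add: sign_weight_eq_diff)
    then show "(parity_weight n True i - parity_weight n False i) * (?h / pi * (-1)^i)
        = ?h / pi * \<bar>sign_weight n i\<bar>"
      by (subst sign_weight_mult_sign[symmetric]) (simp add: mult_ac)
  qed
  also have "\<dots> = ?h / pi * (\<Sum>i\<le>n. \<bar>sign_weight n i\<bar>)"
    by (simp add: sum_distrib_left)
  also have "\<dots> = 4 * w / (pi * n)"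
    using sum_abs_sign_weight[OF assms(1)] by simp
  finally show ?thesis .
qed

lemma SUP_risk_ge_two_point:
  assumes n: "n > 0" and w: "0 < w" "w \<le> 1/2" and g: "valid_estimator g"
    and tv: "real N * (\<Sum>x\<le>t. \<bar>mixture_diff n w t x\<bar>) \<le> 1/2"
  shows "w / (pi * real n) \<le> (SUP R\<in>{R. valid_R R}. risk N t g R)"
proof -
  let ?R = "moment_prior n w" and ?f = "cos_test (2 * w / n) w"
  have R: "valid_R (?R b)" for b
    using valid_R_moment_prior n w by simp
  have "(4 * w / (pi * n)) / 2 \<le> risk N t g (?R True) + risk N t g (?R False)"
    unfolding risk_def
  proof (rule le_cam_two_point[OF finite_samples])
    fix s
    note Delta_g = prob_on_pm1_Delta[OF R] valid_estimator_prob_on_pm1[OF g]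
    show "0 \<le> sample_prob (?R True) t s \<and> 0 \<le> sample_prob (?R False) t s
        \<and> 0 \<le> W1 (Delta (?R True)) (g s) \<and> 0 \<le> W1 (Delta (?R False)) (g s)"
      using sample_prob_nonneg_le_1[OF R] W1_nonneg[OF Delta_g] by auto
    have "(\<integral>d. ?f d \<partial>Delta (?R True)) - (\<integral>d. ?f d \<partial>Delta (?R False))
        \<le> W1 (Delta (?R True)) (g s) + W1 (Delta (?R False)) (g s)"
      by (rule integral_diff_le_W1_add[OF prob_on_pm1_Delta[OF R] prob_on_pm1_Delta[OF R]
          valid_estimator_prob_on_pm1[OF g] lipschitz_on_cos_test]) (use n w in simp)
    then show "4 * w / (pi * n) \<le> W1 (Delta (?R True)) (g s) + W1 (Delta (?R False)) (g s)"
      by (simp add: integral_Delta_moment_prior_diff[OF n w(1)])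
  next
    show "(\<Sum>s\<in>samples N t. sample_prob (?R True) t s) = 1"
      by (simp add: sample_prob_def sum_prod_list_samples sum_pair_prob_moment_prior[OF n])
    show "(\<Sum>s\<in>samples N t. \<bar>sample_prob (?R True) t s - sample_prob (?R False) t s\<bar>) \<le> 1/2"
      using sum_abs_sample_prob_moment_prior_diff_le[OF n less_imp_le[OF w(1)] w(2), of t N] tv by linarith
  qed (use w in simp)
  moreover have "risk N t g (?R b) \<le> (SUP R\<in>{R. valid_R R}. risk N t g R)" for b
    using R by (intro cSUP_upper bdd_above_risk[OF g]) simp
  moreover have "(4 * w / (pi * n)) / 2 = 2 * (w / (pi * n))"
    by simp
  ultimately show ?thesis
    by (smt (verit))
qed

section \<open>Numerical estimates\<close>

lemma power_div_fact_le_exp: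
  fixes x :: real
  assumes "0 \<le> x"
  shows "x^k / fact k \<le> exp x"
proof -
  have "(\<lambda>n. x^n / fact n) sums exp x"
    using exp_converges[of x] by (simp add: divide_inverse mult.commute)
  then have "(\<Sum>n\<in>{k}. x^n / fact n) \<le> exp x"
    using assms by (intro sum_le_suminf[where f = "\<lambda>n. x^n / fact n", THEN order_trans])
      (auto simp: sums_iff)
  then show ?thesis by simp
qed

lemma fact_ge_power_div_exp: "(real k / exp 1)^k \<le> fact k"
proof -
  have "real k ^ k / fact k \<le> exp 1 ^ k"
    using power_div_fact_le_exp[of "real k" k] by (simp add: exp_of_nat_mult[symmetric])
  then show ?thesis by (simp add: power_divide field_simps)
qed

lemma binomial_term_le:
  assumes "0 < n" "n \<le> k" "real t * a = real n / 27" "0 \<le> a"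
  shows "real (t choose k) * a^k \<le> (1/9)^k"
proof -
  have k: "real k > 0" using assms by simp
  have "real (t choose k) * fact k \<le> real t ^ k"
    using binomial_fact_pow[of t k] by (metis of_nat_fact of_nat_le_iff of_nat_mult of_nat_power)
  then have "real (t choose k) * a^k \<le> real t ^ k / fact k * a^k"
    using assms(4) by (intro mult_right_mono) (simp_all add: field_simps)
  also have "\<dots> = (real n / 27)^k / fact k"
    by (simp flip: assms(3) add: power_mult_distrib)
  also have "\<dots> \<le> (real n / 27)^k / (real k / exp 1)^k"
    using k by (intro divide_left_mono fact_ge_power_div_exp) auto
  also have "\<dots> = (exp 1 * real n / (27 * real k))^k"
    using k by (simp add: power_divide field_simps)
  also have "\<dots> \<le> (1/9)^k"
  proof (rule power_mono)
    have "exp 1 * real n \<le> 3 * real k"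
      using exp_le assms(2) by (intro mult_mono) auto
    then show "exp 1 * real n / (27 * real k) \<le> 1/9"
      using k by (simp add: divide_simps mult.commute)
  qed simp
  finally show ?thesis .
qed

lemma binomial_tail_le:
  assumes "0 < n" "real t * a = real n / 27" "0 \<le> a"
  shows "(\<Sum>k\<in>{n..t}. real (t choose k) * a^k) \<le> 9/8 * (1/9)^n"
proof -
  have "(\<Sum>k\<in>{n..t}. real (t choose k) * a^k) \<le> (\<Sum>k\<in>{n..t}. (1/9::real)^k)"
    using binomial_term_le assms by (intro sum_mono) auto
  also have "\<dots> \<le> 9/8 * (1/9)^n"
  proof (cases "n \<le> t")
    case True
    have "(1 - 1/9) * (\<Sum>k\<in>{n..t}. (1/9::real)^k) = (1/9)^n - (1/9)^Suc t"
      by (rule sum_gp_multiplied[OF True])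
    then have "(\<Sum>k\<in>{n..t}. (1/9::real)^k) = 9/8 * ((1/9)^n - (1/9)^Suc t)"
      by (simp only: field_simps) simp
    then show ?thesis by simp
  qed simp
  finally show ?thesis .
qed

lemma N_mult_sum_abs_mixture_diff_le:
  assumes "n > 0" "w \<ge> 0" "N > 0"
    and tail: "4 * (\<Sum>k\<in>{n..t}. real (t choose k) * (4 * w^2)^k) \<le> (1 / (2 * real N))^2"
  shows "real N * (\<Sum>x\<le>t. \<bar>mixture_diff n w t x\<bar>) \<le> 1/2"
proof -
  have "(\<Sum>x\<le>t. \<bar>mixture_diff n w t x\<bar>) \<le> 1 / (2 * real N)"
  proof (rule sum_abs_le_of_chi_square_le[where b = "binom_prob t (1/2)"])
    show "(\<Sum>x\<le>t. binom_prob t (1/2) x) = 1" by (rule sum_binom_prob)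
    show "(\<Sum>x\<le>t. (mixture_diff n w t x)^2 / binom_prob t (1/2) x) \<le> (1 / (2 * real N))^2"
      using chi_square_mixture_diff_le[OF assms(1,2), of t] tail by linarith
  qed (use assms(3) in \<open>auto simp: binom_prob_half\<close>)
  then show ?thesis using assms(3) by (simp add: field_simps)
qed

lemma eight_mult_le_three_power:
  assumes "0 < N" "ln (real N) + 3 \<le> real n"
  shows "8 * real N \<le> 3^n"
proof -
  have "(2::real)^3 \<le> exp 1 ^ 3"
    using exp_ge_add_one_self[of 1] by (intro power_mono) auto
  then have "8 * real N \<le> exp 3 * exp (ln (real N))"
    using assms(1) by (simp flip: exp_of_nat_mult)
  also have "\<dots> \<le> exp (real n)"
    using assms(2) by (simp flip: exp_add)
  also have "\<dots> = exp 1 ^ n"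
    by (simp flip: exp_of_nat_mult)
  also have "\<dots> \<le> 3^n"
    by (intro power_mono exp_le) simp
  finally show ?thesis .
qed

lemma geometric_tail_le_inverse_square:
  assumes N: "0 < N" and n: "ln (real N) + 3 \<le> real n"
  shows "4 * (9/8 * (1/9)^n) \<le> (1 / (2 * real N))^2"
proof -
  have "(8 * real N)^2 \<le> (3^n)^2"
    using eight_mult_le_three_power[OF N n] by (intro power_mono) auto
  moreover have "((3::real)^n)^2 = (3^2)^n"
    by (simp only: power_mult[symmetric] mult.commute)
  ultimately have "64 * (real N)^2 \<le> 9^n"
    by (simp add: power_mult_distrib)
  then have "(9/2) * (4 * (real N)^2) \<le> 1 * 9^n"
    using zero_le_power2[of "real N"] by linarith
  then have "4 * (9/8 * (1/9)^n) \<le> 1 / (4 * (real N)^2)"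
    using N by (simp add: power_one_over divide_simps)
  also have "\<dots> = (1 / (2 * real N))^2"
    by (simp add: power2_eq_square)
  finally show ?thesis .
qed

lemma inverse_sqrt_le_scale:
  fixes n t y :: real
  assumes "0 < n" "0 < t" "0 < y" "1728 * n * t \<le> 62500 * y"
  shows "1/250 * (1 / sqrt y) \<le> sqrt (n / (108 * t)) / (pi * n)"
proof -
  have "pi^2 \<le> 4^2"
    using pi_less_4 by (intro power_mono) auto
  then have "pi^2 * (108 * n * t) \<le> 16 * (108 * n * t)"
    using assms by (intro mult_right_mono) auto
  then have "pi^2 * (108 * n * t) \<le> 250^2 * y"
    using assms(4) by simp
  then have "sqrt (pi^2 * (108 * n * t)) \<le> sqrt (250^2 * y)"
    by (rule real_sqrt_le_mono)
  then have "pi * sqrt (108 * n * t) \<le> 250 * sqrt y"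
    by (simp add: real_sqrt_mult)
  then have "1 / (250 * sqrt y) \<le> 1 / (pi * sqrt (108 * n * t))"
    using assms by (intro divide_left_mono) auto
  also have "\<dots> = sqrt (n / (108 * t)) / (pi * n)"
  proof -
    have "sqrt (108 * n * t) * sqrt (n / (108 * t)) = n"
      using assms by (simp flip: real_sqrt_mult)
    then show ?thesis
      using assms by (simp add: field_simps)
  qed
  finally show ?thesis by simp
qed

lemma SUP_risk_ge_large_t:
  fixes t N n :: nat
  assumes t: "0 < t" and N: "2 \<le> N" and n_lower: "ln (real N) + 3 \<le> real n"
    and n_upper: "real n \<le> 9 * ln (real N)" "n \<le> 27 * t" and g: "valid_estimator g"
  shows "1/250 * max (1 / real t) (1 / sqrt (real t * ln (real N)))
      \<le> (SUP R\<in>{R. valid_R R}. risk N t g R)"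
proof -
  define w where "w = sqrt (real n / (108 * real t))"
  have L: "0 < ln (real N)" using N by simp
  then have n: "0 < n" using n_lower by linarith
  have w_sq: "w^2 = real n / (108 * real t)" and w: "0 < w"
    using n t by (simp_all add: w_def)
  have "w \<le> sqrt (1/4)"
    unfolding w_def using n_upper(2) t by (intro real_sqrt_le_mono) (simp add: field_simps)
  then have w_half: "w \<le> 1/2" by (simp add: real_sqrt_divide)
  have "real t * (4 * w^2) = real n / 27"
    using t by (simp add: w_sq field_simps)
  then have tail: "(\<Sum>k\<in>{n..t}. real (t choose k) * (4 * w^2)^k) \<le> 9/8 * (1/9)^n"
    using n by (intro binomial_tail_le) auto
  then have "real N * (\<Sum>x\<le>t. \<bar>mixture_diff n w t x\<bar>) \<le> 1/2"
    using n w N geometric_tail_le_inverse_square[OF _ n_lower]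
    by (intro N_mult_sum_abs_mixture_diff_le) auto
  then have risk: "w / (pi * real n) \<le> (SUP R\<in>{R. valid_R R}. risk N t g R)"
    using SUP_risk_ge_two_point[OF n w w_half g] by simp
  have "1/250 * (1 / sqrt (real t ^ 2)) \<le> w / (pi * real n)"
    unfolding w_def using n t n_upper(2)
    by (intro inverse_sqrt_le_scale) (auto simp: power2_eq_square)
  moreover have "1/250 * (1 / sqrt (real t * ln (real N))) \<le> w / (pi * real n)"
    unfolding w_def using n t L n_upper(1)
    by (intro inverse_sqrt_le_scale) auto
  ultimately show ?thesis
    using risk t by (auto simp: max_def)
qed

lemma SUP_risk_ge_small_t:
  fixes t N :: nat
  assumes t: "0 < t" and N: "0 < N" and small: "real t \<le> ln (real N)" and g: "valid_estimator g"
  shows "1/250 * max (1 / real t) (1 / sqrt (real t * ln (real N)))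
      \<le> (SUP R\<in>{R. valid_R R}. risk N t g R)"
proof -
  text \<open>With t + 1 nodes all t moments match, so the two sample distributions coincide.\<close>
  have "real N * (\<Sum>x\<le>t. \<bar>mixture_diff (Suc t) (1/2) t x\<bar>) \<le> 1/2"
    using N by (intro N_mult_sum_abs_mixture_diff_le) auto
  then have risk: "(1/2) / (pi * real (Suc t)) \<le> (SUP R\<in>{R. valid_R R}. risk N t g R)"
    by (intro SUP_risk_ge_two_point[OF _ _ _ g]) auto
  have "real t * real t \<le> real t * ln (real N)"
    using small by (intro mult_left_mono) auto
  then have "real t \<le> sqrt (real t * ln (real N))"
    using real_sqrt_le_mono by fastforce
  then have "1 / sqrt (real t * ln (real N)) \<le> 1 / real t"
    using t by (intro divide_left_mono mult_pos_pos) linarith+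
  then have "max (1 / real t) (1 / sqrt (real t * ln (real N))) = 1 / real t"
    by (rule max_absorb1)
  moreover have "1/250 * (1 / real t) \<le> (1/2) / (pi * real (Suc t))"
  proof -
    have "pi * real (Suc t) \<le> 4 * (2 * real t)"
      using pi_less_4 t by (intro mult_mono) auto
    then have "1 / (250 * real t) \<le> 1 / (pi * real (Suc t) * 2)"
      using t by (intro divide_left_mono) auto
    then show ?thesis by (simp add: mult_ac)
  qed
  ultimately show ?thesis
    using risk by simp
qed

theorem theorem1:
  shows "\<exists>c>0. \<forall>(t::nat) (N::nat). 0 < t \<longrightarrow> 0 < N \<longrightarrow>
           real t \<le> real N powr (2 * (exp 4 - 1)) / 36 \<longrightarrow>
           (\<forall>g. valid_estimator g \<longrightarrow>
              (SUP R \<in> {R. valid_R R}. risk N t g R)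
                \<ge> c * max (1 / real t) (1 / sqrt (real t * ln (real N))))"
proof (intro exI[of _ "1/250::real"] conjI allI impI)
  fix t N :: nat and g :: "(nat \<times> nat) list \<Rightarrow> real measure"
  assume t: "0 < t" and N: "0 < N" and t_le: "real t \<le> real N powr (2 * (exp 4 - 1)) / 36"
    and g: "valid_estimator g"
  text \<open>The upper bound on t is only needed to exclude N = 1.\<close>
  have "N \<noteq> 1" using t t_le by auto
  then have N2: "2 \<le> N" using N by simp
  define L where "L = ln (real N)"
  have "ln 2 \<le> L"
    using N2 by (simp add: L_def)
  then have "2/3 \<le> L"
    using ln2_ge_two_thirds by linarith
  define n where "n = nat \<lceil>L\<rceil> + 3"
  have "real n = of_int \<lceil>L\<rceil> + 3"
    using \<open>2/3 \<le> L\<close> by (simp add: n_def)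
  then have n_bounds: "L + 3 \<le> real n" "real n \<le> 9 * L"
    using \<open>2/3 \<le> L\<close> le_of_int_ceiling[of L] of_int_ceiling_le_add_one[of L] by linarith+
  show "1/250 * max (1 / real t) (1 / sqrt (real t * ln (real N))) \<le> (SUP R \<in> {R. valid_R R}. risk N t g R)"
  proof (cases "n \<le> 27 * t")
    case True
    then show ?thesis using SUP_risk_ge_large_t[OF t N2 _ _ True g] n_bounds by (simp add: L_def)
  next
    case False
    then have "real t \<le> L" using n_bounds by linarith
    then show ?thesis using SUP_risk_ge_small_t[OF t N _ g] by (simp add: L_def)
  qed
qed simp

end
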